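(* Let $0<\alpha<1$. Let $(x(t))_{t\ge 0}$ be a sequence of nonnegative reals (attempt rates of a station) and $(\bar{x}(t))_{t\ge0}$ a sequence of positive reals (fair attempt rates). Define $p(0)=0$ and, for $t\ge 0$, $$p(t+1)=\max\Big(0,\; p(t)+\alpha\Big(\tfrac{x(t)}{\bar{x}(t)}-1\Big)\Big),\qquad P_{NACK}(t)=\min\{p(t),1\}.$$ Suppose the normalised attempt rate depends on the acknowledgement-suppression probability through a function $h:[0,1]\to\mathbb{R}$, i.e. $x(t)/\bar{x}(t)=h(P_{NACK}(t))$ for all $t$, where: (i) $h(0)>1$; (ii) $h(1)<1$; (iii) $h$ is strictly decreasing and Lipschitz with a Lipschitz constant smaller than $2/\alpha$. Then the algorithm converges to a point where $x(t)=\bar{x}(t)$; that is, $p(t)\to P$ where $P$ is the unique point of $[0,1]$ with $h(P)=1$, and hence $x(t)/\bar{x}(t)\to 1$.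
   Context: $p(t)$ is the accumulated penalty of a (moderately misbehaving) station under an access-point policing algorithm, and $P_{NACK}(t)$ is the probability with which the access point suppresses acknowledgements of that station's frames at step $t$. *)

theory Defs
  imports "HOL-Analysis.Analysis"
begin

end

theory Submission
  imports Defs
begin

text \<open>Let \<open>P\<close> be the root of \<open>h(P) = 1\<close> and \<open>g(q) = h(min q 1)\<close>, so that
  \<open>p(t+1) = max 0 (p(t) + \<alpha> (g(p(t)) - 1))\<close>. Since \<open>g\<close> is decreasing, each step moves \<open>p\<close>
  towards \<open>P\<close>, and since \<open>g\<close> is \<open>L\<close>-Lipschitz with \<open>\<alpha> L < 2\<close>, it overshoots by less than the
  current distance. Hence \<open>|p(t) - P|\<close> is nonincreasing, and it drops by a uniform amount as long
  as it stays above any \<open>\<epsilon> > 0\<close>, because \<open>g\<close> is bounded away from \<open>1\<close> there. So \<open>p(t) \<rightarrow> P\<close>,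
  and by continuity the normalised rate \<open>g(p(t))\<close> tends to \<open>g(P) = 1\<close>.\<close>

lemma abs_overshoot_le:
  fixes a c d :: real
  assumes "0 \<le> a" "a \<le> c * d"
  shows "\<bar>a - d\<bar> \<le> d - min a ((2 - c) * d)"
  using assms by (auto simp: abs_if min_def algebra_simps)

lemma abs_max_zero_diff_le:
  fixes y P :: real
  assumes "0 \<le> P"
  shows "\<bar>max 0 y - P\<bar> \<le> \<bar>y - P\<bar>"
  using assms by (auto simp: max_def)

lemma projected_step_approaches_root:
  fixes g :: "real \<Rightarrow> real"
  assumes anti: "antimono_on {0..} g" and lip: "L-lipschitz_on {0..} g"
    and P: "0 \<le> P" "g P = 1" and "0 \<le> \<alpha>" "0 \<le> q"
  shows "\<bar>max 0 (q + \<alpha> * (g q - 1)) - P\<bar>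
           \<le> \<bar>q - P\<bar> - min (\<alpha> * \<bar>g q - 1\<bar>) ((2 - \<alpha> * L) * \<bar>q - P\<bar>)"
proof -
  have "\<bar>g q - 1\<bar> \<le> L * \<bar>q - P\<bar>"
    using lipschitz_onD[OF lip, of q P] assms by (simp add: dist_real_def)
  then have overshoot: "\<alpha> * \<bar>g q - 1\<bar> \<le> (\<alpha> * L) * \<bar>q - P\<bar>"
    using mult_left_mono \<open>0 \<le> \<alpha>\<close> by (fastforce simp: mult.assoc)
  have "\<bar>max 0 (q + \<alpha> * (g q - 1)) - P\<bar> \<le> \<bar>q + \<alpha> * (g q - 1) - P\<bar>"
    using P(1) by (rule abs_max_zero_diff_le)
  also have "\<dots> = \<bar>\<alpha> * \<bar>g q - 1\<bar> - \<bar>q - P\<bar>\<bar>"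
  proof (cases "q \<le> P")
    case True
    then have "1 \<le> g q" using monotone_onD[OF anti, of q P] assms by simp
    with True show ?thesis by (simp add: algebra_simps)
  next
    case False
    then have "g q \<le> 1" using monotone_onD[OF anti, of P q] assms by simp
    with False show ?thesis by (simp add: abs_minus_commute algebra_simps)
  qed
  also have "\<dots> \<le> \<bar>q - P\<bar> - min (\<alpha> * \<bar>g q - 1\<bar>) ((2 - \<alpha> * L) * \<bar>q - P\<bar>)"
    using \<open>0 \<le> \<alpha>\<close> by (intro abs_overshoot_le overshoot) simp
  finally show ?thesis .
qed

lemma antimono_on_uniform_gap:
  fixes g :: "real \<Rightarrow> real"
  assumes anti: "antimono_on {0..} g" and P: "0 < P" "g P = 1"
    and only_root: "\<And>q. 0 \<le> q \<Longrightarrow> g q = 1 \<Longrightarrow> q = P" and "0 < \<epsilon>"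
  obtains \<delta> where "0 < \<delta>" "\<And>q. 0 \<le> q \<Longrightarrow> \<epsilon> \<le> \<bar>q - P\<bar> \<Longrightarrow> \<delta> \<le> \<bar>g q - 1\<bar>"
proof
  define l where "l = max (P - \<epsilon>) 0"
  define r where "r = P + \<epsilon>"
  have "l < P" "r > P" "0 \<le> l" using assms by (auto simp: l_def r_def)
  then have "1 \<le> g l" "g r \<le> 1" "g l \<noteq> 1" "g r \<noteq> 1"
    using monotone_onD[OF anti, of l P] monotone_onD[OF anti, of P r] only_root[of l] only_root[of r] P
    by auto
  then show "0 < min (g l - 1) (1 - g r)" by simp
  fix q assume q: "0 \<le> q" "\<epsilon> \<le> \<bar>q - P\<bar>"
  show "min (g l - 1) (1 - g r) \<le> \<bar>g q - 1\<bar>"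
  proof (cases "q < P")
    case True
    then have "q \<le> l" using q by (simp add: l_def)
    then show ?thesis using monotone_onD[OF anti, of q l] q \<open>0 \<le> l\<close> \<open>1 \<le> g l\<close> by simp
  next
    case False
    then have "r \<le> q" using q by (simp add: r_def)
    then show ?thesis using monotone_onD[OF anti, of r q] q \<open>r > P\<close> P \<open>g r \<le> 1\<close> by simp
  qed
qed

lemma decseq_uniform_drop_tendsto_zero:
  fixes V :: "nat \<Rightarrow> real"
  assumes nonneg: "\<And>t. 0 \<le> V t" and dec: "\<And>t. V (Suc t) \<le> V t"
    and drop: "\<And>\<epsilon>. 0 < \<epsilon> \<Longrightarrow> \<exists>\<delta>>0. \<forall>t. \<epsilon> \<le> V t \<longrightarrow> V (Suc t) \<le> V t - \<delta>"
  shows "V \<longlonglongrightarrow> 0"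
proof -
  have "decseq V" using dec by (simp add: decseq_Suc_iff)
  then obtain l where l: "V \<longlonglongrightarrow> l" "\<forall>t. l \<le> V t"
    using decseq_convergent nonneg by blast
  have "l \<le> 0"
  proof (rule ccontr)
    assume "\<not> l \<le> 0"
    then obtain \<delta> where "0 < \<delta>" and \<delta>: "\<And>t. V (Suc t) \<le> V t - \<delta>"
      using drop[of l] l(2) by auto
    have "(\<lambda>t. V (Suc t)) \<longlonglongrightarrow> l" using l(1) by (rule LIMSEQ_Suc)
    moreover have "(\<lambda>t. V t - \<delta>) \<longlonglongrightarrow> l - \<delta>" using l(1) by (intro tendsto_diff) auto
    ultimately have "l \<le> l - \<delta>" using \<delta> by (intro LIMSEQ_le) auto
    with \<open>0 < \<delta>\<close> show False by simp
  qed
  moreover have "0 \<le> l" using l(1) nonneg by (intro LIMSEQ_le_const) auto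
  ultimately show ?thesis using l(1) by simp
qed

lemma projected_iteration_tendsto_root:
  fixes g :: "real \<Rightarrow> real" and p :: "nat \<Rightarrow> real"
  assumes anti: "antimono_on {0..} g" and lip: "L-lipschitz_on {0..} g"
    and P: "0 < P" "g P = 1" and only_root: "\<And>q. 0 \<le> q \<Longrightarrow> g q = 1 \<Longrightarrow> q = P"
    and \<alpha>: "0 < \<alpha>" "\<alpha> * L < 2"
    and p0: "0 \<le> p 0" and p_step: "\<And>t. p (Suc t) = max 0 (p t + \<alpha> * (g (p t) - 1))"
  shows "p \<longlonglongrightarrow> P"
proof -
  have p_nonneg: "0 \<le> p t" for t
    using p0 p_step by (cases t) auto
  define V where "V t = \<bar>p t - P\<bar>" for t
  have V_step: "V (Suc t) \<le> V t - min (\<alpha> * \<bar>g (p t) - 1\<bar>) ((2 - \<alpha> * L) * V t)" for t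
    unfolding V_def p_step
    using projected_step_approaches_root[OF anti lip _ P(2) _ p_nonneg] P \<alpha> by simp
  have "V \<longlonglongrightarrow> 0"
  proof (rule decseq_uniform_drop_tendsto_zero)
    show "0 \<le> V t" for t by (simp add: V_def)
    show "V (Suc t) \<le> V t" for t
    proof -
      have "0 \<le> min (\<alpha> * \<bar>g (p t) - 1\<bar>) ((2 - \<alpha> * L) * V t)"
        using \<alpha> by (auto intro!: mult_nonneg_nonneg simp: V_def)
      then show ?thesis using V_step[of t] by linarith
    qed
    fix \<epsilon> :: real assume "0 < \<epsilon>"
    then obtain \<delta> where "0 < \<delta>" and gap: "\<And>q. 0 \<le> q \<Longrightarrow> \<epsilon> \<le> \<bar>q - P\<bar> \<Longrightarrow> \<delta> \<le> \<bar>g q - 1\<bar>"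
      using antimono_on_uniform_gap[OF anti P only_root] by blast
    have "V (Suc t) \<le> V t - min (\<alpha> * \<delta>) ((2 - \<alpha> * L) * \<epsilon>)" if "\<epsilon> \<le> V t" for t
    proof -
      have "\<alpha> * \<delta> \<le> \<alpha> * \<bar>g (p t) - 1\<bar>"
        using gap[OF p_nonneg] that \<alpha> by (simp add: V_def)
      moreover have "(2 - \<alpha> * L) * \<epsilon> \<le> (2 - \<alpha> * L) * V t"
        using that \<alpha> by (intro mult_left_mono) auto
      ultimately show ?thesis using V_step[of t] by linarith
    qed
    moreover have "0 < min (\<alpha> * \<delta>) ((2 - \<alpha> * L) * \<epsilon>)"
      using \<alpha> \<open>0 < \<delta>\<close> \<open>0 < \<epsilon>\<close> by simp
    ultimately show "\<exists>\<delta>>0. \<forall>t. \<epsilon> \<le> V t \<longrightarrow> V (Suc t) \<le> V t - \<delta>" by blast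
  qed
  then have "(\<lambda>t. p t - P) \<longlonglongrightarrow> 0"
    unfolding V_def[abs_def] by (simp only: tendsto_rabs_zero_iff)
  then show ?thesis
    by (rule LIM_zero_cancel)
qed

lemma strict_antimono_on_unique_crossing:
  fixes h :: "real \<Rightarrow> real"
  assumes cont: "continuous_on {0..1} h" and dec: "strict_antimono_on {0..1} h"
    and above: "c < h 0" and below: "h 1 < c"
  obtains P where "0 < P" "P < 1" "h P = c" "\<And>Q. Q \<in> {0..1} \<Longrightarrow> h Q = c \<Longrightarrow> Q = P"
proof -
  obtain P where P: "0 \<le> P" "P \<le> 1" "h P = c"
    using IVT2'[of h 1 c 0, OF _ _ _ cont] above below by force
  have inj: "inj_on h {0..1}"
    using dec strict_antimono_iff_antimono by blast
  show ?thesis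
  proof (rule that)
    show "0 < P" using P above by (cases "P = 0") auto
    show "P < 1" using P below by (cases "P = 1") auto
    show "h P = c" by (fact P(3))
    show "Q = P" if "Q \<in> {0..1}" "h Q = c" for Q
      using inj_onD[OF inj, of Q P] that P by simp
  qed
qed

lemma antimono_on_clipped:
  fixes h :: "real \<Rightarrow> real"
  assumes "antimono_on {0..1} h"
  shows "antimono_on {0..} (\<lambda>q. h (min q 1))"
  by (rule monotone_onI) (auto intro!: monotone_onD[OF assms])

lemma lipschitz_on_clipped:
  fixes h :: "real \<Rightarrow> real"
  assumes "L-lipschitz_on {0..1} h"
  shows "L-lipschitz_on {0..} (\<lambda>q. h (min q 1))"
proof -
  have "1-lipschitz_on {0..} (\<lambda>q::real. min q 1)"
    by (rule lipschitz_onI) (auto simp: dist_real_def)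
  moreover have "(\<lambda>q::real. min q 1) ` {0..} = {0..1}"
    by (force simp: image_iff intro: bexI[where x = 1])
  ultimately show ?thesis
    using lipschitz_on_compose2[of 1 "{0..}" "\<lambda>q. min q 1" L h] assms by simp
qed

theorem theorem2:
  fixes \<alpha> :: real and x xbar p :: "nat \<Rightarrow> real" and h :: "real \<Rightarrow> real" and L :: real
  assumes alpha: "0 < \<alpha>" "\<alpha> < 1"
    and x_nonneg: "\<And>t. x t \<ge> 0"
    and xbar_pos: "\<And>t. xbar t > 0"
    and p0: "p 0 = 0"
    and p_step: "\<And>t. p (Suc t) = max 0 (p t + \<alpha> * (x t / xbar t - 1))"
    and resp: "\<And>t. x t / xbar t = h (min (p t) 1)"
    and h0: "h 0 > 1"
    and h1: "h 1 < 1"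
    and h_dec: "strict_antimono_on {0..1} h"
    and h_lip: "L-lipschitz_on {0..1} h"
    and L_bound: "L < 2 / \<alpha>"
  shows "\<exists>P. P \<in> {0..1} \<and> h P = 1 \<and> (\<forall>Q\<in>{0..1}. h Q = 1 \<longrightarrow> Q = P)
            \<and> p \<longlonglongrightarrow> P \<and> (\<lambda>t. x t / xbar t) \<longlonglongrightarrow> 1"
proof -
  have h_cont: "continuous_on {0..1} h"
    using h_lip by (rule lipschitz_on_continuous_on)
  obtain P where P: "0 < P" "P < 1" "h P = 1" and uniq: "\<And>Q. Q \<in> {0..1} \<Longrightarrow> h Q = 1 \<Longrightarrow> Q = P"
    using strict_antimono_on_unique_crossing[OF h_cont h_dec h0 h1] by blast
  have p_nonneg: "0 \<le> p t" for t
    using p0 p_step by (cases t) auto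
  have p_lim: "p \<longlonglongrightarrow> P"
  proof (rule projected_iteration_tendsto_root[where g = "\<lambda>q. h (min q 1)"])
    show "antimono_on {0..} (\<lambda>q. h (min q 1))"
      using h_dec strict_antimono_iff_antimono antimono_on_clipped by blast
    show "L-lipschitz_on {0..} (\<lambda>q. h (min q 1))"
      using h_lip by (rule lipschitz_on_clipped)
    show "q = P" if "0 \<le> q" "h (min q 1) = 1" for q
      using that uniq h1 by (cases "q \<le> 1") auto
    show "\<alpha> * L < 2"
      using L_bound alpha by (simp add: field_simps)
  qed (use P alpha p0 p_step resp in auto)
  have "(\<lambda>t. h (min (p t) 1)) \<longlonglongrightarrow> h (min P 1)"
    using p_nonneg P by (intro continuous_on_tendsto_compose[OF h_cont] tendsto_min p_lim) auto
  then have "(\<lambda>t. x t / xbar t) \<longlonglongrightarrow> 1"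
    using resp P by simp
  with P uniq p_lim show ?thesis
    by (intro exI[of _ P]) auto
qed

end
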